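(* Let $\mathcal P$ be as in the context. Let $\mathcal P'$ be the set of $(\mathbf x',\mathbf y')=((x'_1,\dots,x'_T),(y'_1,\dots,y'_T))\in\mathbb R_+^T\times\{0,1\}^T$ satisfying: $-y'_{T-t+2}+y'_{T-t+1}-y'_{T-k+1}\le 0$ for all $t\in[2,T]_{\mathbb Z}$, $k\in[t,\min\{T,t+L-1\}]_{\mathbb Z}$; $y'_{T-t+2}-y'_{T-t+1}+y'_{T-k+1}\le 1$ for all $t\in[2,T]_{\mathbb Z}$, $k\in[t,\min\{T,t+\ell-1\}]_{\mathbb Z}$; $-x'_{T-t+1}+\underline C y'_{T-t+1}\le 0$ and $x'_{T-t+1}-\overline C y'_{T-t+1}\le 0$ for all $t\in[1,T]_{\mathbb Z}$; $x'_{T-t+1}-x'_{T-t+2}\le Vy'_{T-t+2}+\overline V(1-y'_{T-t+2})$ for all $t\in[2,T]_{\mathbb Z}$; $x'_{T-t+2}-x'_{T-t+1}\le Vy'_{T-t+1}+\overline V(1-y'_{T-t+1})$ for all $t\in[2,T]_{\mathbb Z}$. Then $\mathcal P=\mathcal P'$ (as subsets of $\mathbb R^{T}\times\mathbb R^{T}$).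
   Context: For integers $a,b$, $[a,b]_{\mathbb Z}=\{a,a+1,\dots,b\}$ if $a\le b$ and $\emptyset$ otherwise. Fix a positive integer $T$, positive integers $L$ (minimum up time) and $\ell$ (minimum down time), and reals $\overline C,\underline C,V,\overline V$ with $\overline C>\underline C>0$, $V>0$, $\overline V+V\le\overline C$ and $\underline C<\overline V<\underline C+V$. $\mathcal P$ is the set of $(\mathbf x,\mathbf y)=((x_1,\dots,x_T),(y_1,\dots,y_T))\in\mathbb R_+^T\times\{0,1\}^T$ satisfying: (i) $-y_{t-1}+y_t-y_k\le 0$ for all $t\in[2,T]_{\mathbb Z}$, $k\in[t,\min\{T,t+L-1\}]_{\mathbb Z}$; (ii) $y_{t-1}-y_t+y_k\le 1$ for all $t\in[2,T]_{\mathbb Z}$, $k\in[t,\min\{T,t+\ell-1\}]_{\mathbb Z}$; (iii) $-x_t+\underline C y_t\le 0$ and $x_t-\overline C y_t\le 0$ for all $t\in[1,T]_{\mathbb Z}$; (iv) $x_t-x_{t-1}\le Vy_{t-1}+\overline V(1-y_{t-1})$ for all $t\in[2,T]_{\mathbb Z}$; (v) $x_{t-1}-x_t\le Vy_t+\overline V(1-y_t)$ for all $t\in[2,T]_{\mathbb Z}$. *)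

theory Defs
  imports Main "HOL.Real"
begin

text \<open>Vectors in R^T are represented as functions nat \<Rightarrow> real, only the
  components 1..T matter (no constraint is imposed outside 1..T).\<close>

definition polP :: "nat \<Rightarrow> nat \<Rightarrow> nat \<Rightarrow> real \<Rightarrow> real \<Rightarrow> real \<Rightarrow> real \<Rightarrow>
    ((nat \<Rightarrow> real) \<times> (nat \<Rightarrow> real)) set" where
  "polP T L l Cup Clo V Vup = {(x, y).
     (\<forall>t\<in>{1..T}. x t \<ge> 0 \<and> y t \<in> {0, 1}) \<and>
     (\<forall>t\<in>{2..T}. \<forall>k\<in>{t..min T (t + L - 1)}. - y (t - 1) + y t - y k \<le> 0) \<and>
     (\<forall>t\<in>{2..T}. \<forall>k\<in>{t..min T (t + l - 1)}. y (t - 1) - y t + y k \<le> 1) \<and>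
     (\<forall>t\<in>{1..T}. - x t + Clo * y t \<le> 0 \<and> x t - Cup * y t \<le> 0) \<and>
     (\<forall>t\<in>{2..T}. x t - x (t - 1) \<le> V * y (t - 1) + Vup * (1 - y (t - 1))) \<and>
     (\<forall>t\<in>{2..T}. x (t - 1) - x t \<le> V * y t + Vup * (1 - y t))}"

definition polP' :: "nat \<Rightarrow> nat \<Rightarrow> nat \<Rightarrow> real \<Rightarrow> real \<Rightarrow> real \<Rightarrow> real \<Rightarrow>
    ((nat \<Rightarrow> real) \<times> (nat \<Rightarrow> real)) set" where
  "polP' T L l Cup Clo V Vup = {(x', y').
     (\<forall>t\<in>{1..T}. x' t \<ge> 0 \<and> y' t \<in> {0, 1}) \<and>
     (\<forall>t\<in>{2..T}. \<forall>k\<in>{t..min T (t + L - 1)}.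
        - y' (T - t + 2) + y' (T - t + 1) - y' (T - k + 1) \<le> 0) \<and>
     (\<forall>t\<in>{2..T}. \<forall>k\<in>{t..min T (t + l - 1)}.
        y' (T - t + 2) - y' (T - t + 1) + y' (T - k + 1) \<le> 1) \<and>
     (\<forall>t\<in>{1..T}. - x' (T - t + 1) + Clo * y' (T - t + 1) \<le> 0 \<and>
        x' (T - t + 1) - Cup * y' (T - t + 1) \<le> 0) \<and>
     (\<forall>t\<in>{2..T}. x' (T - t + 1) - x' (T - t + 2)
        \<le> V * y' (T - t + 2) + Vup * (1 - y' (T - t + 2))) \<and>
     (\<forall>t\<in>{2..T}. x' (T - t + 2) - x' (T - t + 1)
        \<le> V * y' (T - t + 1) + Vup * (1 - y' (T - t + 1)))}"

end

theory Submission
  imports Defs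
begin

text \<open>\<open>\<P>'\<close> is the image of \<open>\<P>\<close> under time reversal \<open>t \<mapsto> T - t + 1\<close>, so the claim is
  that \<open>\<P>\<close> is invariant under reversal. The bounds are pointwise, and reversal swaps the
  ramp-up and ramp-down constraints. For a binary schedule the minimum-up-time constraints
  say exactly that there is no off--on--off pattern at periods \<open>a < b < c\<close> with
  \<open>c - a \<le> L\<close>, a condition that is visibly symmetric in time; the minimum-down-time
  constraints are the minimum-up-time constraints of \<open>1 - y\<close> with \<open>\<ell>\<close> in place of \<open>L\<close>.\<close>

definition reversal :: "nat \<Rightarrow> (nat \<Rightarrow> 'a) \<Rightarrow> nat \<Rightarrow> 'a" where
  "reversal T f t = f (T - t + 1)"

lemma ball_reversal:
  "(\<forall>t\<in>{1..T}. Q (reversal T x t) (reversal T y t)) \<longleftrightarrow> (\<forall>t\<in>{1..T}. Q (x t) (y t))"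
proof
  assume *: "\<forall>t\<in>{1..T}. Q (reversal T x t) (reversal T y t)"
  show "\<forall>t\<in>{1..T}. Q (x t) (y t)"
  proof
    fix t assume "t \<in> {1..T}"
    then have "T - t + 1 \<in> {1..T}" and "T - (T - t + 1) + 1 = t"
      by auto
    with * show "Q (x t) (y t)"
      unfolding reversal_def by metis
  qed
qed (auto simp: reversal_def)

lemma ball_reversal_consecutive:
  "(\<forall>t\<in>{2..T}. Q (reversal T x (t - 1)) (reversal T y (t - 1)) (reversal T x t) (reversal T y t))
    \<longleftrightarrow> (\<forall>t\<in>{2..T}. Q (x t) (y t) (x (t - 1)) (y (t - 1)))"
proof
  assume *: "\<forall>t\<in>{2..T}. Q (reversal T x (t - 1)) (reversal T y (t - 1)) (reversal T x t) (reversal T y t)"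
  show "\<forall>t\<in>{2..T}. Q (x t) (y t) (x (t - 1)) (y (t - 1))"
  proof
    fix t assume "t \<in> {2..T}"
    then have "T - t + 2 \<in> {2..T}" and "T - (T - t + 2 - 1) + 1 = t" and "T - (T - t + 2) + 1 = t - 1"
      by auto
    with * show "Q (x t) (y t) (x (t - 1)) (y (t - 1))"
      unfolding reversal_def by metis
  qed
next
  assume *: "\<forall>t\<in>{2..T}. Q (x t) (y t) (x (t - 1)) (y (t - 1))"
  show "\<forall>t\<in>{2..T}. Q (reversal T x (t - 1)) (reversal T y (t - 1)) (reversal T x t) (reversal T y t)"
  proof
    fix t assume "t \<in> {2..T}"
    then have "T - t + 2 \<in> {2..T}" and "T - (t - 1) + 1 = T - t + 2" and "T - t + 2 - 1 = T - t + 1"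
      by auto
    with * show "Q (reversal T x (t - 1)) (reversal T y (t - 1)) (reversal T x t) (reversal T y t)"
      unfolding reversal_def by metis
  qed
qed

definition min_up :: "nat \<Rightarrow> nat \<Rightarrow> (nat \<Rightarrow> real) \<Rightarrow> bool" where
  "min_up T L y \<longleftrightarrow> (\<forall>t\<in>{2..T}. \<forall>k\<in>{t..min T (t + L - 1)}. - y (t - 1) + y t - y k \<le> 0)"

definition short_on_run :: "nat \<Rightarrow> nat \<Rightarrow> (nat \<Rightarrow> real) \<Rightarrow> bool" where
  "short_on_run T L y \<longleftrightarrow>
     (\<exists>a b c. 1 \<le> a \<and> a < b \<and> b < c \<and> c \<le> T \<and> c \<le> a + L \<and> y a = 0 \<and> y b = 1 \<and> y c = 0)"

lemma exists_switch_on: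
  fixes a b :: nat
  assumes "a < b" and "y a \<noteq> 1" and "y b = 1"
  shows "\<exists>t. a < t \<and> t \<le> b \<and> y (t - 1) \<noteq> 1 \<and> y t = 1"
  using assms
proof (induction b)
  case 0
  then show ?case by simp
next
  case (Suc b)
  show ?case
  proof (cases "y b = 1")
    case True
    with Suc.prems have "a < b"
      by (metis less_antisym)
    with Suc.IH Suc.prems True show ?thesis
      by (meson le_SucI)
  next
    case False
    with Suc.prems show ?thesis
      by fastforce
  qed
qed

lemma min_up_iff_not_short_on_run:
  assumes binary: "\<forall>t\<in>{1..T}. y t \<in> {0, 1}"
  shows "min_up T L y \<longleftrightarrow> \<not> short_on_run T L y"
proof
  assume min_up: "min_up T L y"
  show "\<not> short_on_run T L y"
  proof
    assume "short_on_run T L y"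
    then obtain a b c where abc: "1 \<le> a" "a < b" "b < c" "c \<le> T" "c \<le> a + L"
      and "y a = 0" "y b = 1" "y c = 0"
      unfolding short_on_run_def by blast
    then obtain t where t: "a < t" "t \<le> b" "y (t - 1) \<noteq> 1" "y t = 1"
      using exists_switch_on[of a b y] by auto
    have "t - 1 \<in> {1..T}"
      using t abc by auto
    with binary t have switch_off: "y (t - 1) = 0"
      by blast
    have "t \<in> {2..T}" and "c \<in> {t..min T (t + L - 1)}"
      using t abc by auto
    with min_up have "- y (t - 1) + y t - y c \<le> 0"
      unfolding min_up_def by blast
    with switch_off t \<open>y c = 0\<close> show False
      by simp
  qed
next
  assume no_run: "\<not> short_on_run T L y"
  show "min_up T L y"
    unfolding min_up_def
  proof (intro ballI)
    fix t k assume t: "t \<in> {2..T}" and k: "k \<in> {t..min T (t + L - 1)}"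
    show "- y (t - 1) + y t - y k \<le> 0"
    proof (rule ccontr)
      assume violated: "\<not> - y (t - 1) + y t - y k \<le> 0"
      have "t - 1 \<in> {1..T}" "t \<in> {1..T}" "k \<in> {1..T}"
        using t k by auto
      then have "y (t - 1) \<in> {0, 1}" "y t \<in> {0, 1}" "y k \<in> {0, 1}"
        using binary by blast+
      with violated have off_on_off: "y (t - 1) = 0" "y t = 1" "y k = 0"
        by auto
      then have "t < k"
        using k by (auto simp: le_less)
      with t k have "1 \<le> t - 1" "t - 1 < t" "k \<le> T" "k \<le> t - 1 + L"
        by auto
      with \<open>t < k\<close> off_on_off have "short_on_run T L y"
        unfolding short_on_run_def by blast
      with no_run show False ..
    qed
  qed
qed

lemma short_on_run_reversal: "short_on_run T L (reversal T y) \<longleftrightarrow> short_on_run T L y"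
proof
  assume "short_on_run T L (reversal T y)"
  then obtain a b c where "1 \<le> a" "a < b" "b < c" "c \<le> T" "c \<le> a + L"
    and "y (T - a + 1) = 0" "y (T - b + 1) = 1" "y (T - c + 1) = 0"
    unfolding short_on_run_def reversal_def by blast
  then show "short_on_run T L y"
    unfolding short_on_run_def
    by (intro exI[of _ "T - c + 1"] exI[of _ "T - b + 1"] exI[of _ "T - a + 1"]) auto
next
  assume "short_on_run T L y"
  then obtain a b c where "1 \<le> a" "a < b" "b < c" "c \<le> T" "c \<le> a + L"
    and "y a = 0" "y b = 1" "y c = 0"
    unfolding short_on_run_def by blast
  then show "short_on_run T L (reversal T y)"
    unfolding short_on_run_def reversal_def
    by (intro exI[of _ "T - c + 1"] exI[of _ "T - b + 1"] exI[of _ "T - a + 1"]) auto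
qed

lemma min_up_reversal:
  assumes "\<forall>t\<in>{1..T}. y t \<in> {0, 1}"
  shows "min_up T L (reversal T y) \<longleftrightarrow> min_up T L y"
proof -
  have "\<forall>t\<in>{1..T}. reversal T y t \<in> {0, 1}"
    using assms ball_reversal[of T "\<lambda>_ b. b \<in> {0, 1}"] by blast
  then show ?thesis
    using assms by (simp add: min_up_iff_not_short_on_run short_on_run_reversal)
qed

lemma mem_polP_iff:
  "(x, y) \<in> polP T L l Cup Clo V Vup \<longleftrightarrow>
     (\<forall>t\<in>{1..T}. x t \<ge> 0 \<and> y t \<in> {0, 1}) \<and>
     min_up T L y \<and> min_up T l (\<lambda>t. 1 - y t) \<and>
     (\<forall>t\<in>{1..T}. - x t + Clo * y t \<le> 0 \<and> x t - Cup * y t \<le> 0) \<and>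
     (\<forall>t\<in>{2..T}. x t - x (t - 1) \<le> V * y (t - 1) + Vup * (1 - y (t - 1))) \<and>
     (\<forall>t\<in>{2..T}. x (t - 1) - x t \<le> V * y t + Vup * (1 - y t))"
proof -
  have "- (1 - a) + (1 - b) - (1 - c) \<le> 0 \<longleftrightarrow> a - b + c \<le> (1::real)" for a b c
    by linarith
  then show ?thesis
    unfolding polP_def min_up_def by simp
qed

lemma reversal_mem_polP_iff:
  "(reversal T x, reversal T y) \<in> polP T L l Cup Clo V Vup \<longleftrightarrow> (x, y) \<in> polP T L l Cup Clo V Vup"
proof -
  have nonneg_binary:
    "(\<forall>t\<in>{1..T}. reversal T x t \<ge> 0 \<and> reversal T y t \<in> {0, 1}) \<longleftrightarrow>
     (\<forall>t\<in>{1..T}. x t \<ge> 0 \<and> y t \<in> {0, 1})"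
    by (rule ball_reversal[where Q = "\<lambda>a b. a \<ge> 0 \<and> b \<in> {0, 1}"])
  have bounds:
    "(\<forall>t\<in>{1..T}. - reversal T x t + Clo * reversal T y t \<le> 0 \<and> reversal T x t - Cup * reversal T y t \<le> 0)
     \<longleftrightarrow> (\<forall>t\<in>{1..T}. - x t + Clo * y t \<le> 0 \<and> x t - Cup * y t \<le> 0)"
    by (rule ball_reversal[where Q = "\<lambda>a b. - a + Clo * b \<le> 0 \<and> a - Cup * b \<le> 0"])
  have ramp_up:
    "(\<forall>t\<in>{2..T}. reversal T x t - reversal T x (t - 1)
        \<le> V * reversal T y (t - 1) + Vup * (1 - reversal T y (t - 1)))
     \<longleftrightarrow> (\<forall>t\<in>{2..T}. x (t - 1) - x t \<le> V * y t + Vup * (1 - y t))"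
    by (rule ball_reversal_consecutive[where Q = "\<lambda>p q r s. r - p \<le> V * q + Vup * (1 - q)"])
  have ramp_down:
    "(\<forall>t\<in>{2..T}. reversal T x (t - 1) - reversal T x t
        \<le> V * reversal T y t + Vup * (1 - reversal T y t))
     \<longleftrightarrow> (\<forall>t\<in>{2..T}. x t - x (t - 1) \<le> V * y (t - 1) + Vup * (1 - y (t - 1)))"
    by (rule ball_reversal_consecutive[where Q = "\<lambda>p q r s. p - r \<le> V * s + Vup * (1 - s)"])
  have min_up_down:
    "min_up T L (reversal T y) \<longleftrightarrow> min_up T L y"
    "min_up T l (\<lambda>t. 1 - reversal T y t) \<longleftrightarrow> min_up T l (\<lambda>t. 1 - y t)"
    if "\<forall>t\<in>{1..T}. y t \<in> {0, 1}"
  proof -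
    show "min_up T L (reversal T y) \<longleftrightarrow> min_up T L y"
      using that by (rule min_up_reversal)
    have "\<forall>t\<in>{1..T}. 1 - y t \<in> {0, 1}"
      using that by auto
    then have "min_up T l (reversal T (\<lambda>t. 1 - y t)) \<longleftrightarrow> min_up T l (\<lambda>t. 1 - y t)"
      by (rule min_up_reversal)
    moreover have "reversal T (\<lambda>t. 1 - y t) = (\<lambda>t. 1 - reversal T y t)"
      unfolding reversal_def ..
    ultimately show "min_up T l (\<lambda>t. 1 - reversal T y t) \<longleftrightarrow> min_up T l (\<lambda>t. 1 - y t)"
      by simp
  qed
  show ?thesis
    unfolding mem_polP_iff nonneg_binary bounds ramp_up ramp_down
    using min_up_down by blast
qed

lemma mem_polP'_iff:
  "(x, y) \<in> polP' T L l Cup Clo V Vup \<longleftrightarrow> (reversal T x, reversal T y) \<in> polP T L l Cup Clo V Vup"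
proof -
  have "(\<forall>t\<in>{1..T}. x t \<ge> 0 \<and> y t \<in> {0, 1}) \<longleftrightarrow>
    (\<forall>t\<in>{1..T}. reversal T x t \<ge> 0 \<and> reversal T y t \<in> {0, 1})"
    by (rule ball_reversal[symmetric])
  then show ?thesis
    unfolding polP_def polP'_def mem_Collect_eq prod.case
    by (simp add: reversal_def Suc_diff_le)
qed

theorem lemma2:
  fixes T L l :: nat and Cup Clo V Vup :: real
  assumes "T > 0" and "L > 0" and "l > 0"
    and "Cup > Clo" and "Clo > 0" and "V > 0" and "Vup + V \<le> Cup"
    and "Clo < Vup" and "Vup < Clo + V"
  shows "polP T L l Cup Clo V Vup = polP' T L l Cup Clo V Vup"
  by (auto simp: mem_polP'_iff reversal_mem_polP_iff)

end
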